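(* There is a regular language $L$ such that ${\rm pssr}(L)$ is not regular; for instance $L=0^+10^+$, for which ${\rm pssr}(L)\cap 0^+110^+=\{0^n110^n : n\ge 2\}$.
   Context: For words $x=a_1\cdots a_n$, $y=b_1\cdots b_n$ of the same length, the perfect shuffle is $x\,\text{sh}\,y=a_1b_1a_2b_2\cdots a_nb_n$. $x^R$ denotes the reversal of $x$. For a language $L$, ${\rm pssr}(L)=\{x\,\text{sh}\,x^R : x\in L\}$. *)

theory Defs
  imports Main
begin

datatype bin = B0 | B1

definition regular :: "'a list set \<Rightarrow> bool" where
  "regular L \<longleftrightarrow> (\<exists>(Q::nat set) (\<delta>::nat \<Rightarrow> 'a \<Rightarrow> nat) q0 F.
      finite Q \<and> q0 \<in> Q \<and> F \<subseteq> Q \<and> (\<forall>q\<in>Q. \<forall>a. \<delta> q a \<in> Q) \<and>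
      L = {w. foldl \<delta> q0 w \<in> F})"

fun psh :: "'a list \<Rightarrow> 'a list \<Rightarrow> 'a list" where
  "psh (a # x) (b # y) = a # b # psh x y"
| "psh _ _ = []"

definition pssr :: "'a list set \<Rightarrow> 'a list set" where
  "pssr L = {psh x (rev x) | x. x \<in> L}"

definition L0 :: "bin list set" where
  "L0 = {replicate m B0 @ [B1] @ replicate n B0 | m n. m \<ge> 1 \<and> n \<ge> 1}"

definition L011 :: "bin list set" where
  "L011 = {replicate m B0 @ [B1, B1] @ replicate n B0 | m n. m \<ge> 1 \<and> n \<ge> 1}"

end

theory Submission
  imports Defs
begin

(*
  Regularity is witnessed by an explicit five-state automaton.

  For x = 0^m 1 0^n the perfect shuffle of x with its reversal has the closed form
  0^k 1 0^(2d) 1 0^k, with (k, d) = (2m, n - m) if m <= n and (2n+1, m - n - 1)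
  otherwise.  Intersecting with 0^+ 11 0^+ forces d = 0, which gives
  pssr L0 \<inter> 0^+ 11 0^+ = {0^k 11 0^k | k >= 2}.

  Non-regularity follows from a pigeonhole principle for automata: among the
  infinitely many prefixes 0^(i+2) two reach the same state, so they cannot be
  separated by the suffix 11 0^(i+2) -- but that suffix separates them in pssr L0.
*)

section \<open>A pigeonhole principle for regular languages\<close>

lemma foldl_closed:
  assumes "\<forall>q\<in>Q. \<forall>a. \<delta> q a \<in> Q" and "q \<in> Q"
  shows "foldl \<delta> q w \<in> Q"
  using assms(2) by (induction w arbitrary: q) (auto simp: assms(1))

text \<open>Any infinite sequence of words contains two distinct members that no
  suffix distinguishes with respect to a regular language (the easy half of
  Myhill--Nerode).\<close>
lemma regular_indistinguishable:
  fixes f :: "nat \<Rightarrow> 'a list"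
  assumes "regular L"
  shows "\<exists>i j. i \<noteq> j \<and> (\<forall>v. f i @ v \<in> L \<longleftrightarrow> f j @ v \<in> L)"
proof -
  obtain Q :: "nat set" and \<delta> q0 F where
    fin: "finite Q" and q0: "q0 \<in> Q" and closed: "\<forall>q\<in>Q. \<forall>a. \<delta> q a \<in> Q"
    and L: "L = {w. foldl \<delta> q0 w \<in> F}"
    using assms unfolding regular_def by blast
  let ?state = "\<lambda>i. foldl \<delta> q0 (f i)"
  have "range ?state \<subseteq> Q" using foldl_closed[OF closed q0] by blast
  then have "\<not> inj ?state"
    using fin finite_subset finite_imageD[of ?state UNIV] by auto
  then obtain i j where "i \<noteq> j" "?state i = ?state j" unfolding inj_def by blast
  then show ?thesis unfolding L by (intro exI[of _ i] exI[of _ j]) auto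
qed

lemma zeros_one_cancel:
  "replicate a B0 @ B1 # u = replicate c B0 @ B1 # v \<Longrightarrow> a = c \<and> u = v"
proof (induction a arbitrary: c)
  case 0 then show ?case by (cases c) auto
next
  case (Suc a) then show ?case by (cases c) auto
qed

lemma no_B1_iff_zeros: "B1 \<notin> set w \<longleftrightarrow> w = replicate (length w) B0"
proof (induction w)
  case (Cons a w) then show ?case by (cases a) auto
qed simp

section \<open>Regularity of 0^+ 1 0^+\<close>

text \<open>State 1 is initial, 0 means ``read 0^+'', 2 ``read 0^+ 1'', 3 ``read
  0^+ 1 0^+'' (accepting) and 4 is the sink.\<close>
definition L0_step :: "nat \<Rightarrow> bin \<Rightarrow> nat" where
  "L0_step q a = (case a of
      B0 \<Rightarrow> if q \<le> 1 then 0 else if q \<le> 3 then 3 else 4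
    | B1 \<Rightarrow> if q = 0 then 2 else 4)"

text \<open>The transition table as simplification rules; they are normalised
  because the simplifier writes the state 1 as Suc 0.\<close>
lemma L0_step_table [simplified, simp]:
  "L0_step 1 B0 = 0" "L0_step 1 B1 = 4"
  "L0_step 0 B0 = 0" "L0_step 0 B1 = 2"
  "L0_step 2 B0 = 3" "L0_step 2 B1 = 4"
  "L0_step 3 B0 = 3" "L0_step 3 B1 = 4"
  "L0_step 4 B0 = 4" "L0_step 4 B1 = 4"
  by (simp_all add: L0_step_def)

text \<open>The language 0^* 1 0^+ accepted from state 0.\<close>
definition L0_tail :: "bin list set" where
  "L0_tail = {replicate m B0 @ B1 # replicate n B0 | m n. n \<ge> 1}"

lemma L0_iff:
  "w \<in> L0 \<longleftrightarrow> (\<exists>m n. m \<ge> 1 \<and> n \<ge> 1 \<and> w = replicate m B0 @ B1 # replicate n B0)"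
  unfolding L0_def by auto

text \<open>How L0 and L0_tail decompose by their first letter; these are exactly the
  transitions of the automaton.\<close>
lemma B0_Cons_L0_tail: "B0 # w \<in> L0_tail \<longleftrightarrow> w \<in> L0_tail"
proof
  assume "B0 # w \<in> L0_tail"
  then obtain m n where "n \<ge> 1" "B0 # w = replicate m B0 @ B1 # replicate n B0"
    unfolding L0_tail_def by blast
  then show "w \<in> L0_tail" unfolding L0_tail_def by (cases m) auto
next
  assume "w \<in> L0_tail"
  then obtain m n where "n \<ge> 1" "w = replicate m B0 @ B1 # replicate n B0"
    unfolding L0_tail_def by blast
  then show "B0 # w \<in> L0_tail" unfolding L0_tail_def
    by (intro CollectI exI[of _ "Suc m"] exI[of _ n]) simp
qed

lemma B1_Cons_L0_tail: "B1 # w \<in> L0_tail \<longleftrightarrow> w \<noteq> [] \<and> B1 \<notin> set w"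
proof
  assume "B1 # w \<in> L0_tail"
  then obtain m n where n: "n \<ge> 1"
    and "replicate 0 B0 @ B1 # w = replicate m B0 @ B1 # replicate n B0"
    unfolding L0_tail_def by auto
  then have "w = replicate n B0" using zeros_one_cancel by blast
  then show "w \<noteq> [] \<and> B1 \<notin> set w" using n by auto
next
  assume "w \<noteq> [] \<and> B1 \<notin> set w"
  then have "length w \<ge> 1" "B1 # w = replicate 0 B0 @ B1 # replicate (length w) B0"
    using no_B1_iff_zeros by (auto simp: Suc_le_eq)
  then show "B1 # w \<in> L0_tail" unfolding L0_tail_def by blast
qed

lemma B0_Cons_L0: "B0 # w \<in> L0 \<longleftrightarrow> w \<in> L0_tail"
proof
  assume "B0 # w \<in> L0"
  then obtain m n where "m \<ge> 1" "n \<ge> 1" "B0 # w = replicate m B0 @ B1 # replicate n B0"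
    unfolding L0_iff by blast
  then show "w \<in> L0_tail" unfolding L0_tail_def by (cases m) auto
next
  assume "w \<in> L0_tail"
  then obtain m n where "n \<ge> 1" "w = replicate m B0 @ B1 # replicate n B0"
    unfolding L0_tail_def by blast
  then show "B0 # w \<in> L0" unfolding L0_iff by (intro exI[of _ "Suc m"] exI[of _ n]) simp
qed

lemma B1_Cons_not_L0: "B1 # w \<notin> L0"
proof
  assume "B1 # w \<in> L0"
  then obtain m n where "m \<ge> 1" "B1 # w = replicate m B0 @ B1 # replicate n B0"
    unfolding L0_iff by blast
  then show False by (cases m) simp_all
qed

lemma L0_run_sink: "foldl L0_step 4 w = 4"
proof (induction w)
  case (Cons a w) then show ?case by (cases a) simp_all
qed simp

lemma L0_run_from_3: "foldl L0_step 3 w = 3 \<longleftrightarrow> B1 \<notin> set w"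
proof (induction w)
  case (Cons a w) then show ?case by (cases a) (simp_all add: L0_run_sink)
qed simp

lemma L0_run_from_2: "foldl L0_step 2 w = 3 \<longleftrightarrow> w \<noteq> [] \<and> B1 \<notin> set w"
proof (cases w)
  case (Cons a w')
  then show ?thesis by (cases a) (simp_all add: L0_run_from_3 L0_run_sink)
qed simp

lemma L0_run_from_0: "foldl L0_step 0 w = 3 \<longleftrightarrow> w \<in> L0_tail"
proof (induction w)
  case Nil then show ?case by (simp add: L0_tail_def)
next
  case (Cons a w) then show ?case
    by (cases a) (simp_all add: B0_Cons_L0_tail B1_Cons_L0_tail L0_run_from_2)
qed

lemma L0_run_from_start: "foldl L0_step 1 w = 3 \<longleftrightarrow> w \<in> L0"
proof (cases w)
  case Nil then show ?thesis by (simp add: L0_iff)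
next
  case (Cons a w') then show ?thesis
    by (cases a) (simp_all add: B0_Cons_L0 B1_Cons_not_L0 L0_run_from_0 L0_run_sink)
qed

lemma regular_L0: "regular L0"
proof -
  have "\<forall>q\<in>{0..4::nat}. \<forall>a. L0_step q a \<in> {0..4}"
    by (auto simp: L0_step_def split: bin.split)
  moreover have "L0 = {w. foldl L0_step 1 w \<in> {3}}"
    using L0_run_from_start by auto
  ultimately show ?thesis unfolding regular_def
    by (intro exI[of _ "{0..4}"] exI[of _ L0_step] exI[of _ 1] exI[of _ "{3}"]) auto
qed

section \<open>Shuffling 0^m 1 0^n with its reversal\<close>

lemma psh_append:
  "length u = length v \<Longrightarrow> psh (u @ u') (v @ v') = psh u v @ psh u' v'"
  by (induction u v rule: list_induct2) auto

lemma psh_replicate: "psh (replicate n c) (replicate n c) = replicate (2 * n) c"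
  by (induction n) auto

lemma psh_framed:
  "psh (a # replicate e c @ [b]) (a' # replicate e c @ [b']) = a # a' # replicate (2 * e) c @ [b, b']"
  using psh_append[of "replicate e c" "replicate e c" "[b]" "[b']"] by (simp add: psh_replicate)

lemma psh_zeros_around:
  assumes "length u = length v"
  shows "psh (replicate k B0 @ u @ replicate k B0) (replicate k B0 @ v @ replicate k B0)
    = replicate (2 * k) B0 @ psh u v @ replicate (2 * k) B0"
  using assms by (simp add: psh_append psh_replicate)

lemma psh_core_balanced:
  "psh (B1 # replicate d B0) (replicate d B0 @ [B1]) = B1 # replicate (2 * d) B0 @ [B1]"
proof (cases d)
  case (Suc e)
  have "psh (B1 # replicate d B0) (replicate d B0 @ [B1])
      = psh (B1 # replicate e B0 @ [B0]) (B0 # replicate e B0 @ [B1])"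
    by (simp add: Suc replicate_append_same)
  also have "\<dots> = B1 # B0 # replicate (2 * e) B0 @ [B0, B1]" by (rule psh_framed)
  finally show ?thesis by (simp add: Suc replicate_app_Cons_same)
qed simp

lemma psh_rev_balanced:
  fixes m d :: nat
  defines "x \<equiv> replicate m B0 @ B1 # replicate (m + d) B0"
  shows "psh x (rev x) = replicate (2 * m) B0 @ B1 # replicate (2 * d) B0 @ B1 # replicate (2 * m) B0"
proof -
  have x: "x = replicate m B0 @ (B1 # replicate d B0) @ replicate m B0"
    and rev_x: "rev x = replicate m B0 @ (replicate d B0 @ [B1]) @ replicate m B0"
    unfolding x_def by (simp_all add: replicate_add add.commute[of m d])
  have "psh x (rev x) = replicate (2 * m) B0 @ psh (B1 # replicate d B0) (replicate d B0 @ [B1])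
      @ replicate (2 * m) B0"
    unfolding rev_x unfolding x by (rule psh_zeros_around) simp
  then show ?thesis by (simp add: psh_core_balanced)
qed

lemma psh_rev_unbalanced:
  fixes n d :: nat
  defines "x \<equiv> replicate (n + Suc d) B0 @ B1 # replicate n B0"
  shows "psh x (rev x)
    = replicate (2 * n + 1) B0 @ B1 # replicate (2 * d) B0 @ B1 # replicate (2 * n + 1) B0"
proof -
  have x: "x = replicate n B0 @ (B0 # replicate d B0 @ [B1]) @ replicate n B0"
    and rev_x: "rev x = replicate n B0 @ (B1 # replicate d B0 @ [B0]) @ replicate n B0"
    unfolding x_def by (simp_all add: replicate_add replicate_append_same)
  have "psh x (rev x) = replicate (2 * n) B0 @ psh (B0 # replicate d B0 @ [B1]) (B1 # replicate d B0 @ [B0])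
      @ replicate (2 * n) B0"
    unfolding rev_x unfolding x by (rule psh_zeros_around) simp
  then have "psh x (rev x) = replicate (2 * n) B0 @ (B0 # B1 # replicate (2 * d) B0 @ [B1, B0])
      @ replicate (2 * n) B0"
    by (simp only: psh_framed)
  then show ?thesis by (simp add: replicate_app_Cons_same)
qed

section \<open>The language pssr L0\<close>

lemma pssr_memI: "x \<in> L \<Longrightarrow> psh x (rev x) \<in> pssr L"
  unfolding pssr_def by blast

lemma pssr_L0_shape:
  assumes "w \<in> pssr L0"
  shows "\<exists>k d. k \<ge> 2 \<and> w = replicate k B0 @ B1 # replicate (2 * d) B0 @ B1 # replicate k B0"
proof -
  obtain m n where mn: "m \<ge> 1" "n \<ge> 1"
    and w: "w = psh (replicate m B0 @ B1 # replicate n B0) (rev (replicate m B0 @ B1 # replicate n B0))"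
    using assms unfolding pssr_def L0_iff by blast
  show ?thesis
  proof (cases "m \<le> n")
    case True
    then obtain d where "n = m + d" using le_Suc_ex by blast
    then show ?thesis using w mn psh_rev_balanced[of m d] by (intro exI[of _ "2 * m"] exI[of _ d]) simp
  next
    case False
    then obtain d where "m = n + Suc d" using less_imp_Suc_add[of n m] by auto
    then show ?thesis using w mn psh_rev_unbalanced[of n d]
      by (intro exI[of _ "2 * n + 1"] exI[of _ d]) simp
  qed
qed

text \<open>Conversely every 0^k 11 0^k with k \<ge> 2 occurs: for even k = 2m it comes
  from 0^m 1 0^m, for odd k = 2n + 1 from 0^(n+1) 1 0^n.\<close>
lemma pssr_L0_twin_ones:
  assumes "k \<ge> 2"
  shows "replicate k B0 @ [B1, B1] @ replicate k B0 \<in> pssr L0"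
proof (cases "even k")
  case True
  then obtain m where k: "k = 2 * m" by blast
  let ?x = "replicate m B0 @ B1 # replicate m B0"
  have "?x \<in> L0" using assms k unfolding L0_iff by (intro exI[of _ m] exI[of _ m]) simp
  moreover have "psh ?x (rev ?x) = replicate k B0 @ [B1, B1] @ replicate k B0"
    using psh_rev_balanced[of m 0] k by simp
  ultimately show ?thesis using pssr_memI by metis
next
  case False
  then obtain n where k: "k = 2 * n + 1" using oddE by blast
  let ?x = "replicate (n + Suc 0) B0 @ B1 # replicate n B0"
  have "?x \<in> L0" using assms k unfolding L0_iff by (intro exI[of _ "n + 1"] exI[of _ n]) simp
  moreover have "psh ?x (rev ?x) = replicate k B0 @ [B1, B1] @ replicate k B0"
    using psh_rev_unbalanced[of n 0] k by simp
  ultimately show ?thesis using pssr_memI by metis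
qed

text \<open>The intersection with 0^+ 11 0^+: adjacent ones force d = 0 in the shape above.\<close>
lemma pssr_L0_inter_L011:
  "pssr L0 \<inter> L011 = {replicate n B0 @ [B1, B1] @ replicate n B0 | n. n \<ge> 2}"
proof (intro set_eqI iffI)
  fix w assume w: "w \<in> pssr L0 \<inter> L011"
  then obtain k d where k: "k \<ge> 2"
    and shape: "w = replicate k B0 @ B1 # (replicate (2 * d) B0 @ B1 # replicate k B0)"
    using pssr_L0_shape[of w] w by blast
  obtain a b where "w = replicate a B0 @ B1 # (B1 # replicate b B0)"
    using w unfolding L011_def by auto
  then have "B1 # replicate b B0 = replicate (2 * d) B0 @ B1 # replicate k B0"
    using shape zeros_one_cancel by blast
  then have "d = 0" by (cases d) auto
  with k shape show "w \<in> {replicate n B0 @ [B1, B1] @ replicate n B0 | n. n \<ge> 2}" by auto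
next
  fix w assume "w \<in> {replicate n B0 @ [B1, B1] @ replicate n B0 | n. n \<ge> 2}"
  then obtain n where n: "n \<ge> 2" and w: "w = replicate n B0 @ [B1, B1] @ replicate n B0" by blast
  have "w \<in> L011" unfolding L011_def w using n by (intro CollectI exI[of _ n]) auto
  with n w pssr_L0_twin_ones show "w \<in> pssr L0 \<inter> L011" by blast
qed

text \<open>The prefixes 0^(i+2) are pairwise distinguished by the suffixes 11 0^(i+2),
  so pssr L0 is not regular.\<close>
lemma not_regular_pssr_L0: "\<not> regular (pssr L0)"
proof
  assume "regular (pssr L0)"
  then obtain i j where "i \<noteq> j"
    and indist: "\<forall>v. replicate (i + 2) B0 @ v \<in> pssr L0 \<longleftrightarrow> replicate (j + 2) B0 @ v \<in> pssr L0"
    using regular_indistinguishable[of "pssr L0" "\<lambda>i. replicate (i + 2) B0"] by blast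
  let ?v = "[B1, B1] @ replicate (i + 2) B0"
  have "replicate (j + 2) B0 @ ?v \<in> pssr L0"
    using indist pssr_L0_twin_ones[of "i + 2"] by simp
  moreover have "replicate (j + 2) B0 @ ?v \<in> L011"
    unfolding L011_def by (intro CollectI exI[of _ "j + 2"] exI[of _ "i + 2"]) simp
  ultimately obtain n where "replicate (j + 2) B0 @ ?v = replicate n B0 @ [B1, B1] @ replicate n B0"
    using pssr_L0_inter_L011 by blast
  then have "replicate (j + 2) B0 @ B1 # (B1 # replicate (i + 2) B0)
      = replicate n B0 @ B1 # (B1 # replicate n B0)" by simp
  from zeros_one_cancel[OF this] have "j + 2 = n" "i + 2 = n"
    by (metis list.inject length_replicate)+
  with \<open>i \<noteq> j\<close> show False by simp
qed

theorem mainTheorem6: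
  shows "(\<exists>L :: bin list set. regular L \<and> \<not> regular (pssr L))
    \<and> regular L0 \<and> \<not> regular (pssr L0)
    \<and> pssr L0 \<inter> L011 = {replicate n B0 @ [B1, B1] @ replicate n B0 | n. n \<ge> 2}"
  using regular_L0 not_regular_pssr_L0 pssr_L0_inter_L011 by blast

end
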